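(* Assume (P1) and (A3). Then for every $q\in\mathbb{R}^n$ and every $p=(p_1,\dots,p_N)$ with $p_i\in\mathbb{R}^n$, the linear system $$\sum_{j=0}^ND_{ij}X_j-A_iX_i=p_i\ (1\le i\le N),\qquad X_0=q,$$ has a unique solution $X_0,\dots,X_N\in\mathbb{R}^n$, and it satisfies $$\|X_j\|_\infty\le 4\|p\|_\infty+2\|q\|_\infty,\qquad 0\le j\le N,$$ where for vectors $\|\cdot\|_\infty$ denotes the maximum absolute entry (for $p$, over all $nN$ entries).
   Context: Radau collocation data: for an integer $N\ge 2$, let $-1<\tau_1<\dots<\tau_N=1$ be the nodes of the $N$-point Gauss–Radau quadrature rule on $[-1,1]$ with fixed node $+1$, and set $\tau_0=-1$. For $0\le j\le N$ let $L_j(\tau)=\prod_{i=0,i\ne j}^{N}\frac{\tau-\tau_i}{\tau_j-\tau_i}$ and let $D$ be the $N\times(N+1)$ matrix $D_{ij}=L_j'(\tau_i)$, $1\le i\le N$, $0\le j\le N$; $D_{1:N}$ denotes the $N\times N$ submatrix formed by columns $1,\dots,N$. For a matrix, $\|\cdot\|_\infty$ is the largest absolute row sum. (P1): $D_{1:N}$ is invertible and $\|D_{1:N}^{-1}\|_\infty\le 2$. Here $f:\mathbb{R}^n\times\mathbb{R}^m\to\mathbb{R}^n$ is continuously differentiable, $(x^*,u^* )$ is a given continuous state–control pair on $[-1,1]$, and $A_i=\nabla_xf(x^*(\tau_i),u^*(\tau_i))$ is the $n\times n$ Jacobian. (A3): $\|\nabla_xf(x^*(t),u^*(t))\|_\infty\le1/4$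 and $\|\nabla_xf(x^*(t),u^*(t))^{\mathsf T}\|_\infty\le1/4$ for all $t\in[-1,1]$. *)

theory Defs
  imports "HOL-Analysis.Analysis" "HOL-Computational_Algebra.Polynomial"
begin

definition radau_nodes :: "nat \<Rightarrow> (nat \<Rightarrow> real) \<Rightarrow> bool" where
  "radau_nodes N tau \<longleftrightarrow>
     -1 < tau 1 \<and> (\<forall>i\<in>{1..<N}. tau i < tau (Suc i)) \<and> tau N = 1 \<and>
     (\<exists>w :: nat \<Rightarrow> real. \<forall>P :: real poly. degree P \<le> 2 * N - 2 \<longrightarrow>
        integral {-1..1} (poly P) = (\<Sum>i=1..N. w i * poly P (tau i)))"

definition lagrange_basis :: "(nat \<Rightarrow> real) \<Rightarrow> nat \<Rightarrow> nat \<Rightarrow> real \<Rightarrow> real" where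
  "lagrange_basis tau N j t = (\<Prod>i\<in>{0..N} - {j}. (t - tau i) / (tau j - tau i))"

definition radau_D :: "(nat \<Rightarrow> real) \<Rightarrow> nat \<Rightarrow> nat \<Rightarrow> nat \<Rightarrow> real" where
  "radau_D tau N i j = deriv (lagrange_basis tau N j) (tau i)"

definition radau_P1 :: "(nat \<Rightarrow> real) \<Rightarrow> nat \<Rightarrow> bool" where
  "radau_P1 tau N \<longleftrightarrow>
     (\<exists>M :: nat \<Rightarrow> nat \<Rightarrow> real.
        (\<forall>i\<in>{1..N}. \<forall>k\<in>{1..N}. (\<Sum>j=1..N. radau_D tau N i j * M j k) = (if i = k then 1 else 0)) \<and>
        (\<forall>i\<in>{1..N}. \<forall>k\<in>{1..N}. (\<Sum>j=1..N. M i j * radau_D tau N j k) = (if i = k then 1 else 0)) \<and>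
        (\<forall>i\<in>{1..N}. (\<Sum>k=1..N. \<bar>M i k\<bar>) \<le> 2))"

definition vec_inf_norm :: "real^'n \<Rightarrow> real" where
  "vec_inf_norm x = (MAX i\<in>UNIV. \<bar>x $ i\<bar>)"

definition mat_inf_norm :: "real^'n^'m \<Rightarrow> real" where
  "mat_inf_norm A = (MAX i\<in>UNIV. \<Sum>j\<in>UNIV. \<bar>A $ i $ j\<bar>)"

end

theory Submission
  imports Defs
begin

text \<open>Since every row of the differentiation matrix D sums to zero (the Lagrange basis is a
  partition of unity), the condition X 0 = q lets one rewrite the system as
  D_{1:N} (X - q) = p + A X on the nodes 1, ..., N. Multiplying by M = D_{1:N}^{-1} turns it
  into the fixed-point equation X = q + M (p + A X), whose right-hand side is a contraction
  with constant \<open>\<parallel>M\<parallel> \<parallel>A\<parallel> \<le> 2 \<cdot> 1/4\<close> in the maximum norm over all nodes. Hence there is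
  exactly one solution, and taking norms in the fixed-point equation gives
  K \<le> \<parallel>q\<parallel> + 2 (\<parallel>p\<parallel> + K/4) for K = max \<parallel>X_j\<parallel>, i.e. K \<le> 4 \<parallel>p\<parallel> + 2 \<parallel>q\<parallel>.
  Only the row-sum half of (A3) enters.\<close>

section \<open>Lagrange basis and the Radau differentiation matrix\<close>

definition lagrange_poly :: "(nat \<Rightarrow> real) \<Rightarrow> nat \<Rightarrow> nat \<Rightarrow> real poly" where
  "lagrange_poly tau N j = (\<Prod>i\<in>{0..N} - {j}. smult (1 / (tau j - tau i)) [:- tau i, 1:])"

lemma poly_lagrange_poly: "poly (lagrange_poly tau N j) = lagrange_basis tau N j"
  by (auto simp: lagrange_poly_def lagrange_basis_def poly_prod fun_eq_iff diff_divide_distrib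
      intro!: prod.cong)

lemma degree_lagrange_poly:
  assumes "j \<le> N"
  shows "degree (lagrange_poly tau N j) \<le> N"
proof -
  have "degree (lagrange_poly tau N j)
          \<le> (\<Sum>i\<in>{0..N} - {j}. degree (smult (1 / (tau j - tau i)) [:- tau i, 1:]))"
    unfolding lagrange_poly_def by (rule order.trans[OF degree_prod_sum_le]) (auto simp: o_def)
  also have "\<dots> \<le> (\<Sum>i\<in>{0..N} - {j}. 1)"
    by (intro sum_mono) (auto intro: order.trans[OF degree_smult_le])
  also have "\<dots> \<le> N" using assms by simp
  finally show ?thesis .
qed

lemma lagrange_basis_at_node:
  assumes "inj_on tau {0..N}" "k \<in> {0..N}" "j \<in> {0..N}"
  shows "lagrange_basis tau N j (tau k) = (if j = k then 1 else 0)"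
proof (cases "j = k")
  case True
  have "tau j \<noteq> tau i" if "i \<in> {0..N} - {j}" for i
    using assms that by (auto dest: inj_onD)
  then show ?thesis using True by (auto simp: lagrange_basis_def intro!: prod.neutral)
next
  case False
  then show ?thesis using assms(2) by (auto simp: lagrange_basis_def intro!: prod_zero bexI[of _ k])
qed

lemma sum_lagrange_poly:
  assumes inj: "inj_on tau {0..N}"
  shows "(\<Sum>j=0..N. lagrange_poly tau N j) = 1"
proof (rule poly_eqI_degree[where A = "tau ` {0..N}"])
  fix x assume "x \<in> tau ` {0..N}"
  then obtain k where k: "k \<in> {0..N}" "x = tau k" by auto
  have "poly (\<Sum>j=0..N. lagrange_poly tau N j) x = (\<Sum>j=0..N. if j = k then 1 else 0)"
    using k inj by (auto simp: poly_sum poly_lagrange_poly lagrange_basis_at_node intro!: sum.cong)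
  then show "poly (\<Sum>j=0..N. lagrange_poly tau N j) x = poly 1 x" using k by simp
next
  have card: "card (tau ` {0..N}) = Suc N" using inj by (simp add: card_image)
  have "degree (\<Sum>j=0..N. lagrange_poly tau N j) \<le> N"
    by (rule degree_sum_le) (auto simp: degree_lagrange_poly)
  then show "degree (\<Sum>j=0..N. lagrange_poly tau N j) < card (tau ` {0..N})" using card by simp
  show "degree (1::real poly) < card (tau ` {0..N})" using card by simp
qed

lemma sum_radau_D_row_eq_0:
  assumes "inj_on tau {0..N}"
  shows "(\<Sum>j=0..N. radau_D tau N i j) = 0"
proof -
  have "radau_D tau N i j = poly (pderiv (lagrange_poly tau N j)) (tau i)" for j
    unfolding radau_D_def poly_lagrange_poly[symmetric] by (rule DERIV_imp_deriv poly_DERIV)+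
  then have "(\<Sum>j=0..N. radau_D tau N i j)
               = poly (pderiv (\<Sum>j=0..N. lagrange_poly tau N j)) (tau i)"
    using higher_pderiv_sum[of 1 "lagrange_poly tau N" "{0..N}"] by (simp add: poly_sum)
  then show ?thesis using sum_lagrange_poly[OF assms] by simp
qed

lemma radau_nodes_strict_mono:
  assumes "radau_nodes N tau" "tau 0 = -1" "i < k" "k \<le> N"
  shows "tau i < tau k"
  using assms(3,4)
proof (induction k)
  case (Suc k)
  have "tau k < tau (Suc k)"
    using assms(1,2) Suc.prems by (cases "k = 0") (auto simp: radau_nodes_def)
  then show ?case using Suc by (cases "i = k") auto
qed simp

lemma radau_nodes_inj_on:
  assumes "radau_nodes N tau" "tau 0 = -1"
  shows "inj_on tau {0..N}"
  by (rule inj_onI) (metis assms radau_nodes_strict_mono atLeastAtMost_iff less_irrefl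
      linorder_neqE_nat)

lemma radau_nodes_in_interval:
  assumes "radau_nodes N tau" "tau 0 = -1" "i \<le> N"
  shows "tau i \<in> {-1..1}"
proof -
  have "tau N = 1" using assms(1) by (simp add: radau_nodes_def)
  then have "tau i \<le> 1" using radau_nodes_strict_mono[OF assms(1,2), of i N] assms(3)
    by (cases "i = N") auto
  moreover have "-1 \<le> tau i" using radau_nodes_strict_mono[OF assms(1,2), of 0 i] assms
    by (cases "i = 0") auto
  ultimately show ?thesis by simp
qed

section \<open>The maximum norm\<close>

lemma abs_component_le_vec_inf_norm: "\<bar>x $ i\<bar> \<le> vec_inf_norm x"
  unfolding vec_inf_norm_def by (rule Max_ge) auto

lemma vec_inf_norm_nonneg: "0 \<le> vec_inf_norm x"
  using abs_component_le_vec_inf_norm[of x] by (meson abs_ge_zero order.trans)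

lemma vec_inf_norm_leI: "(\<And>i. \<bar>x $ i\<bar> \<le> b) \<Longrightarrow> vec_inf_norm x \<le> b"
  unfolding vec_inf_norm_def by (subst Max_le_iff) auto

lemma vec_inf_norm_zero [simp]: "vec_inf_norm 0 = 0"
  unfolding vec_inf_norm_def by simp

lemma vec_inf_norm_le_0_iff: "vec_inf_norm x \<le> 0 \<longleftrightarrow> x = 0"
  by (metis abs_component_le_vec_inf_norm abs_le_zero_iff order.trans vec_eq_iff zero_index
      vec_inf_norm_leI order.refl)

lemma vec_inf_norm_le_norm: "vec_inf_norm x \<le> norm x"
  by (rule vec_inf_norm_leI) (rule component_le_norm_cart)

lemma norm_le_card_vec_inf_norm: "norm (x::real^'n) \<le> real CARD('n) * vec_inf_norm x"
proof -
  have "norm x \<le> (\<Sum>i\<in>UNIV. \<bar>x $ i\<bar>)" by (rule norm_le_l1_cart)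
  also have "\<dots> \<le> (\<Sum>i\<in>(UNIV::'n set). vec_inf_norm x)"
    by (intro sum_mono abs_component_le_vec_inf_norm)
  finally show ?thesis by simp
qed

lemma vec_inf_norm_triangle: "vec_inf_norm (x + y) \<le> vec_inf_norm x + vec_inf_norm y"
  by (rule vec_inf_norm_leI)
    (metis abs_triangle_ineq add_mono order.trans vector_add_component abs_component_le_vec_inf_norm)

lemma vec_inf_norm_scaleR_le: "vec_inf_norm (a *\<^sub>R x) \<le> \<bar>a\<bar> * vec_inf_norm x"
  by (rule vec_inf_norm_leI) (simp add: abs_mult mult_left_mono abs_component_le_vec_inf_norm)

lemma vec_inf_norm_sum_le:
  "finite S \<Longrightarrow> vec_inf_norm (\<Sum>l\<in>S. v l) \<le> (\<Sum>l\<in>S. vec_inf_norm (v l))"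
proof (induction S rule: finite_induct)
  case empty then show ?case by (simp add: vec_inf_norm_leI)
next
  case (insert a S)
  then show ?case by simp (meson add_left_mono order.trans vec_inf_norm_triangle)
qed

lemma vec_inf_norm_sum_scaleR_le:
  assumes "finite S" "\<And>l. l \<in> S \<Longrightarrow> vec_inf_norm (v l) \<le> e"
  shows "vec_inf_norm (\<Sum>l\<in>S. c l *\<^sub>R v l) \<le> (\<Sum>l\<in>S. \<bar>c l\<bar>) * e"
proof -
  have "vec_inf_norm (\<Sum>l\<in>S. c l *\<^sub>R v l) \<le> (\<Sum>l\<in>S. vec_inf_norm (c l *\<^sub>R v l))"
    by (rule vec_inf_norm_sum_le[OF assms(1)])
  also have "\<dots> \<le> (\<Sum>l\<in>S. \<bar>c l\<bar> * e)"
    by (intro sum_mono)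
      (meson abs_ge_zero assms(2) mult_left_mono order.trans vec_inf_norm_scaleR_le)
  finally show ?thesis by (simp add: sum_distrib_right)
qed

lemma vec_inf_norm_matrix_vector_mult_le:
  "vec_inf_norm (A *v x) \<le> mat_inf_norm A * vec_inf_norm x"
proof (rule vec_inf_norm_leI)
  fix i
  have "\<bar>(A *v x) $ i\<bar> = \<bar>\<Sum>j\<in>UNIV. A $ i $ j * x $ j\<bar>" by (simp add: matrix_vector_mult_def)
  also have "\<dots> \<le> (\<Sum>j\<in>UNIV. \<bar>A $ i $ j\<bar> * vec_inf_norm x)"
    by (rule order.trans[OF sum_abs])
      (auto intro!: sum_mono simp: abs_mult mult_left_mono abs_component_le_vec_inf_norm)
  also have "\<dots> = (\<Sum>j\<in>UNIV. \<bar>A $ i $ j\<bar>) * vec_inf_norm x" by (simp add: sum_distrib_right)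
  also have "\<dots> \<le> mat_inf_norm A * vec_inf_norm x"
    unfolding mat_inf_norm_def by (intro mult_right_mono vec_inf_norm_nonneg Max_ge) auto
  finally show "\<bar>(A *v x) $ i\<bar> \<le> mat_inf_norm A * vec_inf_norm x" .
qed

lemma mat_inf_norm_nonneg: "0 \<le> mat_inf_norm A"
proof -
  have "0 \<le> (\<Sum>j\<in>UNIV. \<bar>A $ i $ j\<bar>)" for i by (simp add: sum_nonneg)
  also have "\<dots> i \<le> mat_inf_norm A" for i unfolding mat_inf_norm_def by (rule Max_ge) auto
  finally show ?thesis .
qed

section \<open>Contractions on finitely many components\<close>

definition componentwise_contraction ::
    "nat set \<Rightarrow> real \<Rightarrow> ((nat \<Rightarrow> real^'n) \<Rightarrow> nat \<Rightarrow> real^'n) \<Rightarrow> bool" where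
  "componentwise_contraction I c T \<longleftrightarrow>
     (\<forall>X Y e. (\<forall>j\<in>I. vec_inf_norm (X j - Y j) \<le> e) \<longrightarrow>
              (\<forall>j\<in>I. vec_inf_norm (T X j - T Y j) \<le> c * e))"

lemma componentwise_contractionD:
  "componentwise_contraction I c T \<Longrightarrow> \<forall>j\<in>I. vec_inf_norm (X j - Y j) \<le> e \<Longrightarrow>
     \<forall>j\<in>I. vec_inf_norm (T X j - T Y j) \<le> c * e"
  unfolding componentwise_contraction_def by blast

lemma componentwise_contraction_fixpoint_unique:
  fixes T :: "(nat \<Rightarrow> real^'n) \<Rightarrow> nat \<Rightarrow> real^'n"
  assumes "finite I" "c < 1"
    and contr: "componentwise_contraction I c T"
    and "\<forall>j\<in>I. T X j = X j" "\<forall>j\<in>I. T Y j = Y j" "j \<in> I"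
  shows "X j = Y j"
proof -
  define e where "e = (MAX i\<in>I. vec_inf_norm (X i - Y i))"
  have le_e: "\<forall>i\<in>I. vec_inf_norm (X i - Y i) \<le> e" unfolding e_def using assms(1) by auto
  have "\<forall>i\<in>I. vec_inf_norm (X i - Y i) \<le> c * e"
    using componentwise_contractionD[OF contr le_e] assms(4,5) by auto
  then have "e \<le> c * e" unfolding e_def using assms(1,6) by (subst Max_le_iff) auto
  then have "(1 - c) * e \<le> 0" by (simp add: algebra_simps)
  then have "e \<le> 0" using \<open>c < 1\<close> by (simp add: mult_le_0_iff)
  then have "vec_inf_norm (X j - Y j) \<le> 0" using le_e assms(6) by fastforce
  then show ?thesis by (simp add: vec_inf_norm_le_0_iff)
qed

lemma componentwise_contraction_has_fixpoint:
  fixes T :: "(nat \<Rightarrow> real^'n) \<Rightarrow> nat \<Rightarrow> real^'n"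
  assumes I: "finite I" and c: "0 \<le> c" "c < 1"
    and contr: "componentwise_contraction I c T"
  shows "\<exists>X. \<forall>j\<in>I. T X j = X j"
proof -
  define Xs where "Xs k = (T ^^ k) (\<lambda>_. 0)" for k
  define B where "B = (\<Sum>j\<in>I. vec_inf_norm (Xs 1 j - Xs 0 j))"
  have step: "\<forall>j\<in>I. vec_inf_norm (Xs (Suc k) j - Xs k j) \<le> B * c ^ k" for k
  proof (induction k)
    case 0 show ?case unfolding B_def using I by (auto intro!: member_le_sum vec_inf_norm_nonneg)
  next
    case (Suc k)
    then show ?case using componentwise_contractionD[OF contr Suc.IH] by (simp add: Xs_def mult_ac)
  qed
  have convergent: "convergent (\<lambda>k. Xs k j)" if j: "j \<in> I" for j
  proof -
    have "summable (\<lambda>k. Xs (Suc k) j - Xs k j)"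
    proof (rule summable_comparison_test)
      show "\<exists>N0. \<forall>k\<ge>N0. norm (Xs (Suc k) j - Xs k j) \<le> real CARD('n) * B * c ^ k"
      proof (intro exI allI impI)
        fix k
        have "norm (Xs (Suc k) j - Xs k j) \<le> real CARD('n) * vec_inf_norm (Xs (Suc k) j - Xs k j)"
          by (rule norm_le_card_vec_inf_norm)
        also have "\<dots> \<le> real CARD('n) * (B * c ^ k)" using step j by (intro mult_left_mono) auto
        finally show "norm (Xs (Suc k) j - Xs k j) \<le> real CARD('n) * B * c ^ k" by simp
      qed
      show "summable (\<lambda>k. real CARD('n) * B * c ^ k)"
        using c by (intro summable_mult summable_geometric) simp
    qed
    then have "(\<lambda>k. Xs 0 j + (\<Sum>i<k. Xs (Suc i) j - Xs i j))
                \<longlonglongrightarrow> Xs 0 j + (\<Sum>i. Xs (Suc i) j - Xs i j)"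
      by (intro tendsto_add tendsto_const summable_LIMSEQ)
    then show ?thesis
      unfolding convergent_def sum_lessThan_telescope[of "\<lambda>i. Xs i j"] by auto
  qed
  define X where "X j = lim (\<lambda>k. Xs k j)" for j
  have Xs_lim: "(\<lambda>k. Xs k j) \<longlonglongrightarrow> X j" if "j \<in> I" for j
    using convergent[OF that] by (simp add: X_def convergent_LIMSEQ_iff)
  have "T X j = X j" if j: "j \<in> I" for j
  proof -
    define e where "e k = (\<Sum>i\<in>I. norm (Xs k i - X i))" for k
    have "e \<longlonglongrightarrow> 0"
      unfolding e_def using Xs_lim
      by (auto intro!: tendsto_null_sum simp: tendsto_norm_zero_iff LIM_zero_iff)
    moreover have "vec_inf_norm (Xs k i - X i) \<le> e k" if "i \<in> I" for k i
      unfolding e_def using I that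
      by (intro order.trans[OF vec_inf_norm_le_norm] member_le_sum) auto
    ultimately have "vec_inf_norm (T (Xs k) j - T X j) \<le> c * e k" for k
      using componentwise_contractionD[OF contr, of "Xs k" X "e k"] j by blast
    then have "norm (T (Xs k) j - T X j) \<le> real CARD('n) * (c * e k)" for k
      by (rule order.trans[OF norm_le_card_vec_inf_norm mult_left_mono]) simp
    moreover have "(\<lambda>k. real CARD('n) * (c * e k)) \<longlonglongrightarrow> 0"
      using \<open>e \<longlonglongrightarrow> 0\<close> by (intro tendsto_mult_right_zero)
    ultimately have "(\<lambda>k. T (Xs k) j - T X j) \<longlonglongrightarrow> 0"
      by (metis (no_types, lifting) Lim_null_comparison always_eventually)
    then have "(\<lambda>k. Xs (Suc k) j) \<longlonglongrightarrow> T X j" by (simp add: Xs_def LIM_zero_iff)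
    then show ?thesis using LIMSEQ_unique LIMSEQ_Suc[OF Xs_lim[OF j]] by blast
  qed
  then show ?thesis by blast
qed

section \<open>The collocation system\<close>

lemma sum_scaleR_eq_sum_scaleR_diff:
  fixes y :: "'a \<Rightarrow> 'b::real_vector"
  assumes "(\<Sum>j\<in>S. d j) = 0"
  shows "(\<Sum>j\<in>S. d j *\<^sub>R y j) = (\<Sum>j\<in>S. d j *\<^sub>R (y j - c))"
proof -
  have "(\<Sum>j\<in>S. d j *\<^sub>R (y j - c)) = (\<Sum>j\<in>S. d j *\<^sub>R y j) - (\<Sum>j\<in>S. d j) *\<^sub>R c"
    by (simp add: scaleR_diff_right sum_subtractf scaleR_sum_left)
  then show ?thesis using assms by simp
qed

text \<open>M is the inverse of the block D_{1:N}; the theorem is the instance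
  \<open>\<mu> = 2\<close>, \<open>\<alpha> = 1/4\<close> with D the Radau differentiation matrix.\<close>

locale collocation_system =
  fixes N :: nat and D M :: "nat \<Rightarrow> nat \<Rightarrow> real" and A :: "nat \<Rightarrow> real^'n^'n" and \<mu> \<alpha> :: real
  assumes N_pos: "1 \<le> N"
    and D_row_sum: "\<And>i. i \<in> {1..N} \<Longrightarrow> (\<Sum>j=0..N. D i j) = 0"
    and D_M: "\<And>i k. i \<in> {1..N} \<Longrightarrow> k \<in> {1..N} \<Longrightarrow>
                (\<Sum>j=1..N. D i j * M j k) = (if i = k then 1 else 0)"
    and M_D: "\<And>i k. i \<in> {1..N} \<Longrightarrow> k \<in> {1..N} \<Longrightarrow>
                (\<Sum>j=1..N. M i j * D j k) = (if i = k then 1 else 0)"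
    and M_norm: "\<And>i. i \<in> {1..N} \<Longrightarrow> (\<Sum>k=1..N. \<bar>M i k\<bar>) \<le> \<mu>"
    and A_norm: "\<And>i. i \<in> {1..N} \<Longrightarrow> mat_inf_norm (A i) \<le> \<alpha>"
    and mu_alpha_less_1: "\<mu> * \<alpha> < 1"
begin

definition solves :: "real^'n \<Rightarrow> (nat \<Rightarrow> real^'n) \<Rightarrow> (nat \<Rightarrow> real^'n) \<Rightarrow> bool" where
  "solves q p X \<longleftrightarrow> (\<forall>i\<in>{1..N}. (\<Sum>j=0..N. D i j *\<^sub>R X j) - A i *v X i = p i) \<and> X 0 = q"

definition picard_map ::
    "real^'n \<Rightarrow> (nat \<Rightarrow> real^'n) \<Rightarrow> (nat \<Rightarrow> real^'n) \<Rightarrow> nat \<Rightarrow> real^'n" where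
  "picard_map q p X j = (if j = 0 then q else q + (\<Sum>l=1..N. M j l *\<^sub>R (p l + A l *v X l)))"

lemma mu_nonneg: "0 \<le> \<mu>"
proof -
  have "0 \<le> (\<Sum>k=1..N. \<bar>M 1 k\<bar>)" by (simp add: sum_nonneg)
  moreover have "(\<Sum>k=1..N. \<bar>M 1 k\<bar>) \<le> \<mu>" using M_norm N_pos by simp
  ultimately show ?thesis by linarith
qed

lemma alpha_nonneg: "0 \<le> \<alpha>"
  using A_norm[of 1] N_pos mat_inf_norm_nonneg[of "A 1"] by simp

lemma sum_M_sum_D:
  fixes v :: "nat \<Rightarrow> real^'n"
  assumes "l \<in> {1..N}"
  shows "(\<Sum>i=1..N. M l i *\<^sub>R (\<Sum>j=1..N. D i j *\<^sub>R v j)) = v l"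
proof -
  have "(\<Sum>i=1..N. M l i *\<^sub>R (\<Sum>j=1..N. D i j *\<^sub>R v j))
          = (\<Sum>j=1..N. (\<Sum>i=1..N. M l i * D i j) *\<^sub>R v j)"
    by (simp add: scaleR_sum_right scaleR_sum_left) (rule sum.swap)
  also have "\<dots> = (\<Sum>j=1..N. if l = j then v j else 0)"
    using M_D assms by (intro sum.cong) auto
  finally show ?thesis using assms by simp
qed

lemma sum_D_sum_M:
  fixes v :: "nat \<Rightarrow> real^'n"
  assumes "i \<in> {1..N}"
  shows "(\<Sum>j=1..N. D i j *\<^sub>R (\<Sum>l=1..N. M j l *\<^sub>R v l)) = v i"
proof -
  have "(\<Sum>j=1..N. D i j *\<^sub>R (\<Sum>l=1..N. M j l *\<^sub>R v l))
          = (\<Sum>l=1..N. (\<Sum>j=1..N. D i j * M j l) *\<^sub>R v l)"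
    by (simp add: scaleR_sum_right scaleR_sum_left) (rule sum.swap)
  also have "\<dots> = (\<Sum>l=1..N. if i = l then v l else 0)"
    using D_M assms by (intro sum.cong) auto
  finally show ?thesis using assms by simp
qed

lemma sum_D_eq_sum_D_diff:
  fixes X :: "nat \<Rightarrow> real^'n"
  assumes "X 0 = q" "i \<in> {1..N}"
  shows "(\<Sum>j=0..N. D i j *\<^sub>R X j) = (\<Sum>j=1..N. D i j *\<^sub>R (X j - q))"
proof -
  have "(\<Sum>j=0..N. D i j *\<^sub>R X j) = (\<Sum>j=0..N. D i j *\<^sub>R (X j - q))"
    by (rule sum_scaleR_eq_sum_scaleR_diff[OF D_row_sum[OF assms(2)]])
  also have "\<dots> = D i 0 *\<^sub>R (X 0 - q) + (\<Sum>j=1..N. D i j *\<^sub>R (X j - q))"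
    by (simp add: sum.atLeast_Suc_atMost)
  finally show ?thesis using assms(1) by simp
qed

lemma fixpoint_0:
  assumes "\<forall>j\<in>{0..N}. picard_map q p X j = X j"
  shows "X 0 = q"
proof -
  have "picard_map q p X 0 = X 0" using assms by simp
  then show ?thesis unfolding picard_map_def by simp
qed

lemma fixpoint_nonzero:
  assumes "\<forall>j\<in>{0..N}. picard_map q p X j = X j" "j \<in> {1..N}"
  shows "X j = q + (\<Sum>l=1..N. M j l *\<^sub>R (p l + A l *v X l))"
proof -
  have "picard_map q p X j = X j" using assms by simp
  then show ?thesis using assms(2) unfolding picard_map_def by simp
qed

lemma solves_iff_fixpoint: "solves q p X \<longleftrightarrow> (\<forall>j\<in>{0..N}. picard_map q p X j = X j)"
proof
  assume X: "solves q p X"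
  then have X0: "X 0 = q" by (simp add: solves_def)
  have residual: "p i + A i *v X i = (\<Sum>j=1..N. D i j *\<^sub>R (X j - q))" if i: "i \<in> {1..N}" for i
  proof -
    have "(\<Sum>j=0..N. D i j *\<^sub>R X j) - A i *v X i = p i" using X i by (simp add: solves_def)
    then have "p i + A i *v X i = (\<Sum>j=0..N. D i j *\<^sub>R X j)" by (metis diff_add_cancel)
    then show ?thesis using sum_D_eq_sum_D_diff[of X q i, OF X0 i] by simp
  qed
  show "\<forall>j\<in>{0..N}. picard_map q p X j = X j"
  proof
    fix l assume "l \<in> {0..N}"
    show "picard_map q p X l = X l"
    proof (cases "l = 0")
      case True with X0 show ?thesis by (simp add: picard_map_def)
    next
      case False
      with \<open>l \<in> {0..N}\<close> have l: "l \<in> {1..N}" by auto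
      have "(\<Sum>i=1..N. M l i *\<^sub>R (p i + A i *v X i))
              = (\<Sum>i=1..N. M l i *\<^sub>R (\<Sum>j=1..N. D i j *\<^sub>R (X j - q)))"
        using residual by (intro sum.cong) simp_all
      also have "\<dots> = X l - q" by (rule sum_M_sum_D[OF l])
      finally show ?thesis using False by (simp add: picard_map_def)
    qed
  qed
next
  assume fixpoint: "\<forall>j\<in>{0..N}. picard_map q p X j = X j"
  have X0: "X 0 = q" using fixpoint by (rule fixpoint_0)
  have "X j - q = (\<Sum>l=1..N. M j l *\<^sub>R (p l + A l *v X l))" if "j \<in> {1..N}" for j
    using fixpoint_nonzero[OF fixpoint that] by (metis add_diff_cancel_left')
  then have residual: "(\<Sum>j=1..N. D i j *\<^sub>R (X j - q)) = p i + A i *v X i" if "i \<in> {1..N}" for i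
    using sum_D_sum_M[OF that, of "\<lambda>l. p l + A l *v X l"] by simp
  show "solves q p X"
    unfolding solves_def
  proof (intro conjI ballI)
    fix i assume i: "i \<in> {1..N}"
    show "(\<Sum>j=0..N. D i j *\<^sub>R X j) - A i *v X i = p i"
      using sum_D_eq_sum_D_diff[of X q i, OF X0 i] residual[OF i] by simp
  qed (rule X0)
qed

lemma picard_map_contraction: "componentwise_contraction {0..N} (\<mu> * \<alpha>) (picard_map q p)"
  unfolding componentwise_contraction_def
proof (intro allI impI ballI)
  fix X Y :: "nat \<Rightarrow> real^'n" and e j
  assume close: "\<forall>j\<in>{0..N}. vec_inf_norm (X j - Y j) \<le> e" and j: "j \<in> {0..N}"
  have e: "0 \<le> e" using bspec[OF close, of 0] vec_inf_norm_nonneg[of "X 0 - Y 0"] by simp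
  have Ae: "vec_inf_norm (A l *v (X l - Y l)) \<le> \<alpha> * e" if l: "l \<in> {1..N}" for l
  proof -
    have "vec_inf_norm (A l *v (X l - Y l)) \<le> mat_inf_norm (A l) * vec_inf_norm (X l - Y l)"
      by (rule vec_inf_norm_matrix_vector_mult_le)
    also have "\<dots> \<le> \<alpha> * e"
      using A_norm[OF l] bspec[OF close, of l] l
      by (intro mult_mono alpha_nonneg vec_inf_norm_nonneg) auto
    finally show ?thesis .
  qed
  show "vec_inf_norm (picard_map q p X j - picard_map q p Y j) \<le> \<mu> * \<alpha> * e"
  proof (cases "j = 0")
    case True then show ?thesis using e mu_nonneg alpha_nonneg by (simp add: picard_map_def)
  next
    case False
    then have j: "j \<in> {1..N}" using j by auto
    have "picard_map q p X j - picard_map q p Y j = (\<Sum>l=1..N. M j l *\<^sub>R (A l *v (X l - Y l)))"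
      using j by (simp add: picard_map_def sum_subtractf[symmetric] algebra_simps)
    also have "vec_inf_norm \<dots> \<le> (\<Sum>l=1..N. \<bar>M j l\<bar>) * (\<alpha> * e)"
      by (rule vec_inf_norm_sum_scaleR_le) (simp_all add: Ae)
    also have "\<dots> \<le> \<mu> * (\<alpha> * e)"
      using M_norm[OF j] e alpha_nonneg by (intro mult_right_mono) auto
    finally show ?thesis by (simp add: mult.assoc)
  qed
qed

lemma fixpoint_bound:
  assumes fixpoint: "\<forall>j\<in>{0..N}. picard_map q p X j = X j" and j: "j \<in> {0..N}"
  shows "vec_inf_norm (X j)
           \<le> (\<mu> * (MAX i\<in>{1..N}. vec_inf_norm (p i)) + vec_inf_norm q) / (1 - \<mu> * \<alpha>)"
proof -
  define P where "P = (MAX i\<in>{1..N}. vec_inf_norm (p i))"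
  define K where "K = (MAX j\<in>{0..N}. vec_inf_norm (X j))"
  have P: "vec_inf_norm (p l) \<le> P" if "l \<in> {1..N}" for l unfolding P_def using that by auto
  have K: "vec_inf_norm (X l) \<le> K" if "l \<in> {0..N}" for l unfolding K_def using that by auto
  have "0 \<le> P" using P[of 1] N_pos vec_inf_norm_nonneg[of "p 1"] by simp
  moreover have "0 \<le> K" using K[of 0] vec_inf_norm_nonneg[of "X 0"] by simp
  ultimately have PK_nonneg: "0 \<le> P + \<alpha> * K" using alpha_nonneg by simp
  have "vec_inf_norm (X l) \<le> vec_inf_norm q + \<mu> * (P + \<alpha> * K)" if l: "l \<in> {0..N}" for l
  proof (cases "l = 0")
    case True
    have "X l = q" using fixpoint_0[OF fixpoint] True by simp
    then show ?thesis using PK_nonneg mu_nonneg by simp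
  next
    case False
    then have l: "l \<in> {1..N}" using l by auto
    have AX: "vec_inf_norm (A i *v X i) \<le> \<alpha> * K" if i: "i \<in> {1..N}" for i
    proof -
      have "vec_inf_norm (A i *v X i) \<le> mat_inf_norm (A i) * vec_inf_norm (X i)"
        by (rule vec_inf_norm_matrix_vector_mult_le)
      also have "\<dots> \<le> \<alpha> * K"
        using A_norm[OF i] K[of i] i by (intro mult_mono alpha_nonneg vec_inf_norm_nonneg) auto
      finally show ?thesis .
    qed
    have "vec_inf_norm (p i + A i *v X i) \<le> P + \<alpha> * K" if "i \<in> {1..N}" for i
      using vec_inf_norm_triangle[of "p i" "A i *v X i"] P[OF that] AX[OF that] by linarith
    then have "vec_inf_norm (\<Sum>i=1..N. M l i *\<^sub>R (p i + A i *v X i))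
                 \<le> (\<Sum>i=1..N. \<bar>M l i\<bar>) * (P + \<alpha> * K)"
      by (intro vec_inf_norm_sum_scaleR_le) auto
    also have "\<dots> \<le> \<mu> * (P + \<alpha> * K)"
      using M_norm[OF l] PK_nonneg by (rule mult_right_mono)
    finally have sum_bound: "vec_inf_norm (\<Sum>i=1..N. M l i *\<^sub>R (p i + A i *v X i))
                               \<le> \<mu> * (P + \<alpha> * K)" .
    from fixpoint l have "X l = q + (\<Sum>i=1..N. M l i *\<^sub>R (p i + A i *v X i))"
      by (rule fixpoint_nonzero)
    then have "vec_inf_norm (X l) = vec_inf_norm (q + (\<Sum>i=1..N. M l i *\<^sub>R (p i + A i *v X i)))"
      by (rule arg_cong)
    also have "\<dots> \<le> vec_inf_norm q + vec_inf_norm (\<Sum>i=1..N. M l i *\<^sub>R (p i + A i *v X i))"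
      by (rule vec_inf_norm_triangle)
    also have "\<dots> \<le> vec_inf_norm q + \<mu> * (P + \<alpha> * K)"
      using sum_bound by (rule add_left_mono)
    finally show ?thesis .
  qed
  then have "K \<le> vec_inf_norm q + \<mu> * (P + \<alpha> * K)" unfolding K_def by (subst Max_le_iff) auto
  then have "K * (1 - \<mu> * \<alpha>) \<le> \<mu> * P + vec_inf_norm q" by (simp add: algebra_simps)
  then have "K \<le> (\<mu> * P + vec_inf_norm q) / (1 - \<mu> * \<alpha>)"
    using mu_alpha_less_1 by (simp add: pos_le_divide_eq)
  then show ?thesis using K[OF j] unfolding P_def by linarith
qed

theorem unique_solution:
  "\<exists>X. solves q p X \<and> (\<forall>Y. solves q p Y \<longrightarrow> (\<forall>j\<in>{0..N}. Y j = X j))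
     \<and> (\<forall>j\<in>{0..N}. vec_inf_norm (X j)
          \<le> (\<mu> * (MAX i\<in>{1..N}. vec_inf_norm (p i)) + vec_inf_norm q) / (1 - \<mu> * \<alpha>))"
proof -
  have "\<exists>X. \<forall>j\<in>{0..N}. picard_map q p X j = X j"
    by (rule componentwise_contraction_has_fixpoint[OF finite_atLeastAtMost _ mu_alpha_less_1
          picard_map_contraction]) (simp add: mu_nonneg alpha_nonneg)
  then obtain X where X: "\<forall>j\<in>{0..N}. picard_map q p X j = X j" by blast
  show ?thesis
  proof (intro exI[of _ X] conjI allI impI ballI)
    show "solves q p X" using X by (simp add: solves_iff_fixpoint)
    show "Y j = X j" if Y: "solves q p Y" and j: "j \<in> {0..N}" for Y j
    proof -
      from Y have "\<forall>j\<in>{0..N}. picard_map q p Y j = Y j" by (simp add: solves_iff_fixpoint)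
      then show ?thesis
        by (rule componentwise_contraction_fixpoint_unique[OF finite_atLeastAtMost mu_alpha_less_1
              picard_map_contraction _ X j])
    qed
    show "vec_inf_norm (X j)
            \<le> (\<mu> * (MAX i\<in>{1..N}. vec_inf_norm (p i)) + vec_inf_norm q) / (1 - \<mu> * \<alpha>)"
      if "j \<in> {0..N}" for j
      using fixpoint_bound[OF X that] .
  qed
qed

end

theorem lemma4p1:
  fixes N :: nat
    and tau :: "nat \<Rightarrow> real"
    and f :: "(real^'n) \<times> (real^'m) \<Rightarrow> real^'n"
    and f' :: "(real^'n) \<times> (real^'m) \<Rightarrow> ((real^'n) \<times> (real^'m)) \<Rightarrow>\<^sub>L (real^'n)"
    and xs :: "real \<Rightarrow> real^'n"
    and us :: "real \<Rightarrow> real^'m"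
    and q :: "real^'n"
    and p :: "nat \<Rightarrow> real^'n"
  assumes N2: "N \<ge> 2"
    and nodes: "radau_nodes N tau"
    and tau0: "tau 0 = -1"
    and P1: "radau_P1 tau N"
    and f_deriv: "\<And>z. (f has_derivative blinfun_apply (f' z)) (at z)"
    and f'_cont: "continuous_on UNIV f'"
    and xs_cont: "continuous_on {-1..1} xs"
    and us_cont: "continuous_on {-1..1} us"
    and A3: "\<And>t. t \<in> {-1..1} \<Longrightarrow>
               mat_inf_norm (jacobian (\<lambda>x. f (x, us t)) (at (xs t))) \<le> 1/4 \<and>
               mat_inf_norm (transpose (jacobian (\<lambda>x. f (x, us t)) (at (xs t)))) \<le> 1/4"
  shows "\<exists>X :: nat \<Rightarrow> real^'n.
           ((\<forall>i\<in>{1..N}. (\<Sum>j=0..N. radau_D tau N i j *\<^sub>R X j)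
                 - jacobian (\<lambda>x. f (x, us (tau i))) (at (xs (tau i))) *v X i = p i)
            \<and> X 0 = q)
         \<and> (\<forall>Y :: nat \<Rightarrow> real^'n.
              ((\<forall>i\<in>{1..N}. (\<Sum>j=0..N. radau_D tau N i j *\<^sub>R Y j)
                 - jacobian (\<lambda>x. f (x, us (tau i))) (at (xs (tau i))) *v Y i = p i)
               \<and> Y 0 = q) \<longrightarrow> (\<forall>j\<in>{0..N}. Y j = X j))
         \<and> (\<forall>j\<in>{0..N}. vec_inf_norm (X j)
              \<le> 4 * (MAX i\<in>{1..N}. vec_inf_norm (p i)) + 2 * vec_inf_norm q)"
proof -
  obtain M where M:
    "\<forall>i\<in>{1..N}. \<forall>k\<in>{1..N}. (\<Sum>j=1..N. radau_D tau N i j * M j k) = (if i = k then 1 else 0)"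
    "\<forall>i\<in>{1..N}. \<forall>k\<in>{1..N}. (\<Sum>j=1..N. M i j * radau_D tau N j k) = (if i = k then 1 else 0)"
    "\<forall>i\<in>{1..N}. (\<Sum>k=1..N. \<bar>M i k\<bar>) \<le> 2"
    using P1 unfolding radau_P1_def by blast
  interpret collocation_system N "radau_D tau N" M
      "\<lambda>i. jacobian (\<lambda>x. f (x, us (tau i))) (at (xs (tau i)))" 2 "1/4"
  proof
    show "(\<Sum>j=0..N. radau_D tau N i j) = 0" for i
      by (rule sum_radau_D_row_eq_0[OF radau_nodes_inj_on[OF nodes tau0]])
    show "mat_inf_norm (jacobian (\<lambda>x. f (x, us (tau i))) (at (xs (tau i)))) \<le> 1/4"
      if "i \<in> {1..N}" for i
      using A3 radau_nodes_in_interval[OF nodes tau0] that by simp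
  qed (use N2 M in auto)
  have "(2 * (MAX i\<in>{1..N}. vec_inf_norm (p i)) + vec_inf_norm q) / (1 - 2 * (1/4))
          = 4 * (MAX i\<in>{1..N}. vec_inf_norm (p i)) + 2 * vec_inf_norm q"
    by simp
  with unique_solution[of q p] show ?thesis unfolding solves_def by (simp only:)
qed

end
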